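(* Under Strategy 1 (described in the context), let $U_h(\omega)$ be the number of uncles created during the attack cycle $\omega$ that are referred by nephew blocks mined by the honest miners, in $\omega$ or in a later cycle. Then $$\mathbb{E}[U_h]=p^2q+\bigl(p+(1-\gamma)p^2q\bigr)\left(\frac{q^2}{p}\bigl(1-q^{n_1-1}\bigr)\gamma+(1-\gamma)pq^2\,\frac{1-(pq)^{n_1-1}}{1-pq}\right).$$
   Context: Honest hashrate $p$, attacker hashrate $q$, $p+q=1$, $0<q<p$; $\gamma\in[0,1]$ is the fraction of honest hashrate mining on the attacker's block during a public competition between equal-height blocks. Attack cycles are i.i.d. words in S (attacker block) and H (honest block): H, SHS, SHH, or SSwH with $w$ a Dyck word; $\mathbb{P}[H]=p$, $\mathbb{P}[SHS]=pq^2$, $\mathbb{P}[SHH]=p^2q$, $\mathbb{P}[SSwH]=q^2p(pq)^{|w|}$ ($|w|$ half the length of $w$). In SHH the second honest block is built on the attacker's block with probability $\gamma$ and on the first honest block with probability $1-\gamma$. Ethereum rules: an uncle is a non-official block whose parent is official; a nephew (official block) may refer an uncle at distance (height difference) at most $n_1$ ($n_1\ge2$ an integer). Strategy 1: the attacker withholds his blocks, and each time the honest miners publish a block he publishes the part of his secret fork of the same height as the public honest chain (a fraction $\gamma$ of honest hashrate then mines on the attacker's branch); the attacker's fork wins in cycles starting with SS; all miners refer all possible uncles. *)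

theory Defs
  imports "HOL-Analysis.Analysis"
begin

(* Letters of an attack cycle: True = S (attacker block), False = H (honest block). *)

definition count_S :: "bool list \<Rightarrow> nat" where
  "count_S w = length (filter id w)"

definition count_H :: "bool list \<Rightarrow> nat" where
  "count_H w = length (filter Not w)"

definition dyck :: "bool list \<Rightarrow> bool" where
  "dyck w \<longleftrightarrow> count_S w = count_H w \<and>
     (\<forall>k\<le>length w. count_H (take k w) \<le> count_S (take k w))"

definition valid_cycle :: "bool list \<Rightarrow> bool" where
  "valid_cycle w \<longleftrightarrow> w = [False] \<or> w = [True, False, True] \<or> w = [True, False, False]
     \<or> (\<exists>v. dyck v \<and> w = True # True # v @ [False])"

(* Probability of a cycle word: P[H]=p, P[SHS]=pq^2, P[SHH]=p^2q, P[SSwH]=q^2p(pq)^|w|,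
   i.e. q^(#S) p^(#H) on valid cycles. *)
definition cycle_prob :: "real \<Rightarrow> real \<Rightarrow> bool list \<Rightarrow> real" where
  "cycle_prob p q w = (if valid_cycle w then q ^ count_S w * p ^ count_H w else 0)"

(* A cycle outcome is a word together with one independent gamma-coin per honest block:
   coin i (0-based, for the (i+1)-th honest block) = True means that this honest block was mined
   by the fraction gamma of honest hashrate working on the attacker's (published) competing block. *)
definition outcome_prob :: "real \<Rightarrow> real \<Rightarrow> real \<Rightarrow> bool list \<times> bool list \<Rightarrow> real" where
  "outcome_prob p q \<gamma> wc = (case wc of (w, c) \<Rightarrow>
     if length c = count_H w
     then cycle_prob p q w * (\<Prod>b\<leftarrow>c. if b then \<gamma> else 1 - \<gamma>)
     else 0)"

(* Blocks created during a cycle. Heights are relative to the last official block before the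
   cycle (height 0); times are positions in the cycle word. *)
record blk =
  honest :: bool
  height :: nat
  mined :: nat
  published :: nat
  official :: bool
  parent_official :: bool

(* Cycles where the attacker's fork wins (SHS and SSwH) under Strategy 1:
   the j-th attacker block has height j and is official; the i-th honest block has height i,
   is published when mined, is orphaned, and its parent is official iff i = 1 or it was mined
   on the attacker's block of height i-1 (gamma-coin). *)
definition fork_blocks :: "bool list \<Rightarrow> bool list \<Rightarrow> blk list" where
  "fork_blocks w c = map (\<lambda>k.
     if w ! k then
       \<lparr>honest = False, height = count_S (take (Suc k) w), mined = k, published = k,
        official = True, parent_official = True\<rparr>
     else
       \<lparr>honest = True, height = count_H (take (Suc k) w), mined = k, published = k,
        official = False,
        parent_official = (count_H (take (Suc k) w) = 1 \<or> c ! (count_H (take (Suc k) w) - 1))\<rparr>)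
     [0..<length w]"

definition cycle_blocks :: "bool list \<Rightarrow> bool list \<Rightarrow> blk list" where
  "cycle_blocks w c =
    (if w = [False] then
       [\<lparr>honest = True, height = 1, mined = 0, published = 0, official = True, parent_official = True\<rparr>]
     else if w = [True, False, False] then
       (if c ! 1 then
          [\<lparr>honest = False, height = 1, mined = 0, published = 1, official = True, parent_official = True\<rparr>,
           \<lparr>honest = True, height = 1, mined = 1, published = 1, official = False, parent_official = True\<rparr>,
           \<lparr>honest = True, height = 2, mined = 2, published = 2, official = True, parent_official = True\<rparr>]
        else
          [\<lparr>honest = False, height = 1, mined = 0, published = 1, official = False, parent_official = True\<rparr>,
           \<lparr>honest = True, height = 1, mined = 1, published = 1, official = True, parent_official = True\<rparr>,
           \<lparr>honest = True, height = 2, mined = 2, published = 2, official = True, parent_official = True\<rparr>])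
     else fork_blocks w c)"

(* Number of blocks added to the official chain by a cycle. *)
definition growth :: "bool list \<Rightarrow> nat" where
  "growth w = (if w = [False] then 1 else if w = [True, False, False] then 2 else count_S w)"

definition shift_blk :: "nat \<Rightarrow> nat \<Rightarrow> blk \<Rightarrow> blk" where
  "shift_blk dh dt b = b\<lparr>height := height b + dh, mined := mined b + dt,
                         published := published b + dt\<rparr>"

definition is_uncle :: "blk \<Rightarrow> bool" where
  "is_uncle u \<longleftrightarrow> \<not> official u \<and> parent_official u"

definition can_refer :: "nat \<Rightarrow> blk \<Rightarrow> blk \<Rightarrow> bool" where
  "can_refer n1 b u \<longleftrightarrow> official b \<and> published u < mined b \<and>
     height u < height b \<and> height b \<le> height u + n1"

(* Since all miners refer all possible uncles, an uncle is referred by the lowest official block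
   that can refer it. *)
definition U_h :: "nat \<Rightarrow> bool list \<times> bool list \<Rightarrow> bool list \<times> bool list \<Rightarrow> nat" where
  "U_h n1 \<omega> \<omega>' = (case \<omega> of (w, c) \<Rightarrow> case \<omega>' of (w', c') \<Rightarrow>
     (let B = cycle_blocks w c @ map (shift_blk (growth w) (length w)) (cycle_blocks w' c')
      in length (filter (\<lambda>u. is_uncle u \<and>
           (\<exists>b\<in>set B. can_refer n1 b u \<and> honest b \<and>
              (\<forall>b'\<in>set B. can_refer n1 b' u \<longrightarrow> height b \<le> height b')))
         (cycle_blocks w c))))"

end

(*
  An uncle of an attack cycle is referred by an honest nephew in only two situations.  In a
  cycle SHH the losing block of height 1 is referred at once by the honest block of height 2.
  In a cycle won by the attacker, an uncle followed only by honest blocks of the cycle can be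
  referred only by the first block of the next cycle, which does so iff it is honest and within
  distance n1; every other uncle of the cycle is first referable by an attacker block.
  Consecutive cycles being independent,
    E[U_h] = P[SHH] + E[fork uncles] * P[the next cycle starts with an honest official block].

  In a winning cycle SS v H the block followed by exactly j letters is such an uncle iff v ends
  with j letters H, j < n1 - 1 and its parent is official, which has probability gamma, or
  probability 1 if the block has height 1, i.e. if v = S^j H^j.  Reversing the prefix of v
  and exchanging S and H maps the Dyck words ending with j letters H onto the walks from level
  j down to 0 that never go below 0, so their total weight q^#S p^#H is q^j times that of the
  walks.  The latter is 1/p for every starting level: it is a bounded solution of a linear
  recurrence whose other solutions grow like (p/q)^h.
*)
theory Submission
  imports Defs
begin

lemma has_sum_Sigma_nonneg:
  fixes f :: "'a \<times> 'b \<Rightarrow> real"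
  assumes "\<And>z. 0 \<le> f z"
    and inner: "\<And>x. x \<in> A \<Longrightarrow> ((\<lambda>y. f (x, y)) has_sum g x) (B x)"
    and outer: "(g has_sum s) A"
  shows "(f has_sum s) (Sigma A B)"
  using assms by (intro has_sum_SigmaI[OF inner outer] summable_on_SigmaI[OF inner]
      has_sum_imp_summable[OF outer]) auto

lemma has_sum_product_nonneg:
  fixes g :: "'a \<Rightarrow> real" and h :: "'b \<Rightarrow> real"
  assumes "\<And>x. 0 \<le> g x" "\<And>y. 0 \<le> h y" "(g has_sum G) UNIV" "(h has_sum H) UNIV"
  shows "((\<lambda>(x, y). g x * h y) has_sum G * H) UNIV"
proof -
  have "((\<lambda>(x, y). g x * h y) has_sum G * H) (UNIV \<times> UNIV)"
  proof (rule has_sum_Sigma_nonneg)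
    show "((\<lambda>y. case (x, y) of (x, y) \<Rightarrow> g x * h y) has_sum g x * H) UNIV" for x
      using has_sum_cmult_right[OF assms(4)] by simp
    show "((\<lambda>x. g x * H) has_sum G * H) UNIV"
      using has_sum_cmult_left[OF assms(3)] .
  qed (use assms in auto)
  then show ?thesis by simp
qed

lemma has_sum_sum:
  fixes f :: "'i \<Rightarrow> 'a \<Rightarrow> 'b::topological_comm_monoid_add"
  assumes "finite I" "\<And>i. i \<in> I \<Longrightarrow> (f i has_sum s i) A"
  shows "((\<lambda>x. \<Sum>i\<in>I. f i x) has_sum (\<Sum>i\<in>I. s i)) A"
  using assms by (induction I rule: finite_induct) (auto intro: has_sum_add)

lemma has_sum_mult_of_bool:
  fixes f :: "'a \<Rightarrow> real"
  assumes "(f has_sum s) {x \<in> A. P x}"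
  shows "((\<lambda>x. f x * of_bool (P x)) has_sum s) A"
  using assms by (subst has_sum_cong_neutral[where T = "{x \<in> A. P x}" and g = f]) auto

lemma of_nat_card_less_eq_sum:
  fixes n :: nat
  shows "of_nat (card {j. j < n \<and> P j}) = (\<Sum>j<n. of_bool (P j) :: 'a::semiring_1)"
proof (induction n)
  case (Suc n)
  have "{j. j < Suc n \<and> P j} = (if P n then insert n {j. j < n \<and> P j} else {j. j < n \<and> P j})"
    by (auto simp: less_Suc_eq)
  then show ?case using Suc by (simp add: add.commute)
qed simp

lemma bool_list_split:
  "A = {u \<in> A. u = []} \<union> Cons True ` {u. True # u \<in> A} \<union> Cons False ` {u. False # u \<in> A}"
proof (rule set_eqI)
  fix u :: "bool list"
  show "u \<in> A \<longleftrightarrow> u \<in> {u \<in> A. u = []} \<union> Cons True ` {u. True # u \<in> A} \<union> Cons False ` {u. False # u \<in> A}"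
  proof (cases u)
    case (Cons b v)
    then show ?thesis by (cases b) auto
  qed auto
qed

lemma sum_bool_list_split:
  fixes f :: "bool list \<Rightarrow> 'a::comm_monoid_add"
  assumes "finite A"
  shows "sum f A = (if [] \<in> A then f [] else 0)
    + sum (\<lambda>u. f (True # u)) {u. True # u \<in> A} + sum (\<lambda>u. f (False # u)) {u. False # u \<in> A}"
proof -
  let ?E = "{u \<in> A. u = []}" and ?T = "Cons True ` {u. True # u \<in> A}"
    and ?F = "Cons False ` {u. False # u \<in> A}"
  have fin: "finite {u. b # u \<in> A}" for b
    using assms by (intro finite_vimageI[where h = "Cons b", unfolded vimage_def]) auto
  have "sum f A = sum f (?E \<union> ?T \<union> ?F)"
    using bool_list_split[of A] by simp
  also have "\<dots> = sum f (?E \<union> ?T) + sum f ?F"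
    by (rule sum.union_disjoint) (use assms fin in auto)
  also have "sum f (?E \<union> ?T) = sum f ?E + sum f ?T"
    by (rule sum.union_disjoint) (use assms fin in auto)
  also have "?E = (if [] \<in> A then {[]} else {})" by auto
  finally show ?thesis by (simp add: sum.reindex)
qed

lemma has_sum_bool_list_split:
  fixes f :: "bool list \<Rightarrow> 'a::topological_comm_monoid_add"
  assumes "((\<lambda>u. f (True # u)) has_sum a) {u. True # u \<in> A}"
    and "((\<lambda>u. f (False # u)) has_sum b) {u. False # u \<in> A}"
  shows "(f has_sum (if [] \<in> A then f [] else 0) + a + b) A"
proof -
  have empty: "{u \<in> A. u = []} = (if [] \<in> A then {[]} else {})" by auto
  have "(f has_sum (if [] \<in> A then f [] else 0)) {u \<in> A. u = []}"
    by (rule has_sum_finiteI) (auto simp: empty)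
  moreover have "(f has_sum a) (Cons True ` {u. True # u \<in> A})"
    "(f has_sum b) (Cons False ` {u. False # u \<in> A})"
    using assms by (auto simp: has_sum_reindex o_def)
  ultimately have "(f has_sum (if [] \<in> A then f [] else 0) + a + b)
      ({u \<in> A. u = []} \<union> Cons True ` {u. True # u \<in> A} \<union> Cons False ` {u. False # u \<in> A})"
    by (intro has_sum_Un_disjoint) auto
  then show ?thesis by (subst bool_list_split)
qed

lemma finite_bool_lists_length: "finite {c :: bool list. length c = n}"
  using finite_lists_length_eq[of "UNIV :: bool set" n] by simp

lemma sum_bool_lists_length_Suc:
  fixes f :: "bool list \<Rightarrow> 'a::comm_monoid_add"
  shows "(\<Sum>c | length c = Suc n. f c) = (\<Sum>c | length c = n. f (True # c)) + (\<Sum>c | length c = n. f (False # c))"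
  using sum_bool_list_split[OF finite_bool_lists_length, of f "Suc n"] by simp

lemma count_S_simps [simp]:
  "count_S [] = 0" "count_S (True # u) = Suc (count_S u)" "count_S (False # u) = count_S u"
  "count_S (u @ v) = count_S u + count_S v" "count_S (replicate j b) = (if b then j else 0)"
  by (auto simp: count_S_def)

lemma count_H_simps [simp]:
  "count_H [] = 0" "count_H (True # u) = count_H u" "count_H (False # u) = Suc (count_H u)"
  "count_H (u @ v) = count_H u + count_H v" "count_H (replicate j b) = (if b then 0 else j)"
  by (auto simp: count_H_def)

lemma count_S_plus_count_H: "count_S u + count_H u = length u"
  by (induction u) (auto split: if_splits simp: count_S_def count_H_def)

lemma count_S_rev_map_Not [simp]: "count_S (rev (map Not u)) = count_H u"
  by (simp add: count_S_def count_H_def rev_filter[symmetric] filter_map o_def id_def)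

lemma count_H_rev_map_Not [simp]: "count_H (rev (map Not u)) = count_S u"
  by (simp add: count_S_def count_H_def rev_filter[symmetric] filter_map o_def id_def)

lemma count_S_take_Suc:
  "k < length w \<Longrightarrow> count_S (take (Suc k) w) = count_S (take k w) + of_bool (w ! k)"
  by (simp add: take_Suc_conv_app_nth count_S_def)

lemma count_H_take_Suc:
  "k < length w \<Longrightarrow> count_H (take (Suc k) w) = count_H (take k w) + of_bool (\<not> w ! k)"
  by (simp add: take_Suc_conv_app_nth count_H_def)

lemma count_S_take_mono: "m \<le> m' \<Longrightarrow> count_S (take m w) \<le> count_S (take m' w)"
  using count_S_simps(4)[of "take m w" "take (m' - m) (drop m w)"] by (simp add: take_add[symmetric])

lemma count_H_take_mono: "m \<le> m' \<Longrightarrow> count_H (take m w) \<le> count_H (take m' w)"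
  using count_H_simps(4)[of "take m w" "take (m' - m) (drop m w)"] by (simp add: take_add[symmetric])

lemma count_S_take_le: "count_S (take m w) \<le> count_S w"
  by (metis count_S_take_mono nat_le_linear take_all)

lemma count_H_take_le: "count_H (take m w) \<le> count_H w"
  by (metis count_H_take_mono nat_le_linear take_all)

lemma rev_map_Not_involution [simp]: "rev (map Not (rev (map Not u))) = u"
  by (simp add: rev_map o_def)

lemma count_H_eq_0_imp_replicate: "count_H a = 0 \<Longrightarrow> a = replicate (count_S a) True"
proof (induction a)
  case (Cons b a)
  then show ?case by (cases b) auto
qed simp

definition ends_with_H :: "nat \<Rightarrow> bool list \<Rightarrow> bool" where
  "ends_with_H j v \<longleftrightarrow> (\<exists>a. v = a @ replicate j False)"

lemma ends_with_H_le_count_H: "ends_with_H j v \<Longrightarrow> j \<le> count_H v"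
  by (auto simp: ends_with_H_def)

lemma ends_with_H_Suc_snoc: "ends_with_H (Suc j) (v @ [b]) \<longleftrightarrow> \<not> b \<and> ends_with_H j v"
  by (auto simp: ends_with_H_def replicate_append_same[symmetric])

lemma ends_with_H_Cons_True: "ends_with_H j (True # v) \<longleftrightarrow> ends_with_H j v"
proof
  assume "ends_with_H j (True # v)"
  then obtain a where a: "True # v = a @ replicate j False" by (auto simp: ends_with_H_def)
  then show "ends_with_H j v"
    by (cases a) (auto simp: ends_with_H_def Cons_replicate_eq)
qed (auto simp: ends_with_H_def)

lemma ends_with_H_iff_nth:
  assumes "j \<le> length v"
  shows "ends_with_H j v \<longleftrightarrow> (\<forall>i. length v - j \<le> i \<and> i < length v \<longrightarrow> \<not> v ! i)"
proof
  assume "ends_with_H j v"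
  then show "\<forall>i. length v - j \<le> i \<and> i < length v \<longrightarrow> \<not> v ! i"
    by (auto simp: ends_with_H_def nth_append)
next
  assume trailing: "\<forall>i. length v - j \<le> i \<and> i < length v \<longrightarrow> \<not> v ! i"
  have "drop (length v - j) v = replicate j False"
  proof (rule nth_equalityI)
    fix i assume i: "i < length (drop (length v - j) v)"
    then have "length v - j \<le> length v - j + i \<and> length v - j + i < length v"
      using assms by auto
    then show "drop (length v - j) v ! i = replicate j False ! i"
      using i trailing assms by simp
  qed (use assms in simp)
  then show "ends_with_H j v"
    unfolding ends_with_H_def by (metis append_take_drop_id)
qed

section \<open>Nonnegative walks and their weights\<close>

fun nonneg_walk :: "nat \<Rightarrow> nat \<Rightarrow> bool list \<Rightarrow> bool" where
  "nonneg_walk h t [] \<longleftrightarrow> h = t"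
| "nonneg_walk h t (True # u) \<longleftrightarrow> nonneg_walk (Suc h) t u"
| "nonneg_walk h t (False # u) \<longleftrightarrow> 0 < h \<and> nonneg_walk (h - 1) t u"

lemma nonneg_walk_append:
  "nonneg_walk h t (u @ v) \<longleftrightarrow> (\<exists>m. nonneg_walk h m u \<and> nonneg_walk m t v)"
proof (induction u arbitrary: h)
  case (Cons b u)
  then show ?case by (cases b) auto
qed simp

lemma nonneg_walk_replicate:
  "nonneg_walk h t (replicate j b) \<longleftrightarrow> (if b then t = h + j else h = t + j)"
  by (induction j arbitrary: h) auto

lemma nonneg_walk_snoc:
  "nonneg_walk h t (u @ [b]) \<longleftrightarrow> (if b then 0 < t \<and> nonneg_walk h (t - 1) u else nonneg_walk h (Suc t) u)"
  by (cases b) (auto simp: nonneg_walk_append)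

lemma nonneg_walk_rev_map_Not: "nonneg_walk t h (rev (map Not u)) \<longleftrightarrow> nonneg_walk h t u"
proof (induction u arbitrary: h)
  case (Cons b u)
  then show ?case by (cases b) (simp_all add: nonneg_walk_snoc)
qed auto

lemma nonneg_walk_shift: "nonneg_walk h t u \<Longrightarrow> nonneg_walk (h + d) (t + d) u"
proof (induction h t u rule: nonneg_walk.induct)
  case (3 h t u)
  then show ?case by (cases h) auto
qed auto

lemma nonneg_walk_iff_counts:
  "nonneg_walk h t u \<longleftrightarrow> h + count_S u = t + count_H u \<and>
     (\<forall>k\<le>length u. count_H (take k u) \<le> h + count_S (take k u))"
proof -
  have all_le_Suc: "(\<forall>k\<le>Suc n. P k) \<longleftrightarrow> P 0 \<and> (\<forall>k\<le>n. P (Suc k))" for n and P :: "nat \<Rightarrow> bool"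
    by (metis Suc_le_mono le0 not0_implies_Suc)
  show ?thesis
  proof (induction h t u rule: nonneg_walk.induct)
    case (3 h t u)
    then show ?case by (cases h) (auto simp: all_le_Suc intro: exI[of _ 0])
  qed (auto simp: all_le_Suc)
qed

lemma dyck_iff_nonneg_walk: "dyck v \<longleftrightarrow> nonneg_walk 0 0 v"
  by (auto simp: dyck_def nonneg_walk_iff_counts)

lemma bounded_geometric_increments_imp_const:
  fixes x :: "nat \<Rightarrow> real"
  assumes step: "\<And>n. x (Suc (Suc n)) - x (Suc n) = r * (x (Suc n) - x n)"
    and r: "1 \<le> r" and bound: "\<And>n. \<bar>x n\<bar> \<le> B"
  shows "x n = x 0"
proof -
  define d where "d = x 1 - x 0"
  have increment: "x (Suc i) - x i = r ^ i * d" for i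
    by (induction i) (simp_all add: d_def step)
  have telescope: "x m - x 0 = d * (\<Sum>i<m. r ^ i)" for m
    using sum_lessThan_telescope[of x m] by (simp add: increment sum_distrib_left mult.commute)
  have "d = 0"
  proof (rule ccontr)
    assume "d \<noteq> 0"
    then obtain m :: nat where m: "2 * B < real m * \<bar>d\<bar>"
      using reals_Archimedean3[of "\<bar>d\<bar>"] by auto
    have "real m \<le> (\<Sum>i<m. r ^ i)"
      using sum_mono[of "{..<m}" "\<lambda>_. 1" "\<lambda>i. r ^ i"] r by (simp add: one_le_power)
    moreover have "\<bar>x m - x 0\<bar> = \<bar>d\<bar> * (\<Sum>i<m. r ^ i)"
      using r by (simp add: telescope abs_mult sum_nonneg)
    ultimately have "real m * \<bar>d\<bar> \<le> \<bar>x m - x 0\<bar>"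
      using mult_right_mono[of "real m" "\<Sum>i<m. r ^ i" "\<bar>d\<bar>"] by (simp add: mult.commute)
    also have "\<dots> \<le> 2 * B"
      using bound[of m] bound[of 0] by linarith
    finally show False using m by simp
  qed
  then show ?thesis using telescope[of n] by simp
qed

definition word_weight :: "real \<Rightarrow> real \<Rightarrow> bool list \<Rightarrow> real" where
  "word_weight p q u = q ^ count_S u * p ^ count_H u"

lemma word_weight_simps [simp]:
  "word_weight p q [] = 1" "word_weight p q (True # u) = q * word_weight p q u"
  "word_weight p q (False # u) = p * word_weight p q u"
  "word_weight p q (u @ v) = word_weight p q u * word_weight p q v"
  by (auto simp: word_weight_def power_add)

locale hashrates =
  fixes p q :: real
  assumes p_plus_q: "p + q = 1" and q_pos: "0 < q" and q_less_p: "q < p"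
begin

lemma p_pos: "0 < p"
  using q_pos q_less_p by simp

lemma q_eq_1_minus_p: "q = 1 - p"
  using p_plus_q by simp

lemma word_weight_nonneg: "0 \<le> word_weight p q u"
  using p_pos q_pos by (simp add: word_weight_def)

lemma sum_word_weight_short_walks_le:
  "sum (word_weight p q) {u. nonneg_walk h 0 u \<and> length u \<le> n} \<le> 1 / p"
proof (induction n arbitrary: h)
  case 0
  have "{u. nonneg_walk h 0 u \<and> length u \<le> 0} = (if h = 0 then {[]} else {})" by auto
  then show ?case using p_pos p_plus_q q_pos by (simp add: field_simps)
next
  case (Suc n)
  have fin: "finite {u. nonneg_walk h 0 u \<and> length u \<le> Suc n}"
    by (rule finite_subset[OF _ finite_lists_length_le[of UNIV "Suc n"]]) auto
  have "sum (word_weight p q) {u. nonneg_walk h 0 u \<and> length u \<le> Suc n}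
      = of_bool (h = 0) + q * sum (word_weight p q) {u. nonneg_walk (Suc h) 0 u \<and> length u \<le> n}
        + (if 0 < h then p * sum (word_weight p q) {u. nonneg_walk (h - 1) 0 u \<and> length u \<le> n} else 0)"
    by (subst sum_bool_list_split[OF fin]) (simp add: sum_distrib_left)
  also have "\<dots> \<le> of_bool (h = 0) + q * (1 / p) + (if 0 < h then p * (1 / p) else 0)"
    using mult_left_mono[OF Suc.IH[of "Suc h"], of q] mult_left_mono[OF Suc.IH[of "h - 1"], of p]
      p_pos q_pos by auto
  also have "\<dots> \<le> 1 / p"
    using p_pos by (auto simp: q_eq_1_minus_p field_simps)
  finally show ?case .
qed

lemma sum_word_weight_walks_le:
  assumes "finite F" "F \<subseteq> {u. nonneg_walk h 0 u}"
  shows "sum (word_weight p q) F \<le> 1 / p"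
proof -
  have "F \<subseteq> {u. nonneg_walk h 0 u \<and> length u \<le> Max (length ` F)}"
    using assms by auto
  then have "sum (word_weight p q) F \<le> sum (word_weight p q) {u. nonneg_walk h 0 u \<and> length u \<le> Max (length ` F)}"
    by (intro sum_mono2 word_weight_nonneg finite_subset[OF _ finite_lists_length_le[of UNIV]]) auto
  also have "\<dots> \<le> 1 / p"
    by (rule sum_word_weight_short_walks_le)
  finally show ?thesis .
qed

lemma summable_on_walks: "word_weight p q summable_on {u. nonneg_walk h 0 u}"
  by (rule nonneg_bdd_above_summable_on)
     (auto simp: word_weight_nonneg intro!: bdd_aboveI2 sum_word_weight_walks_le)

definition walk_weight :: "nat \<Rightarrow> real" where
  "walk_weight h = infsum (word_weight p q) {u. nonneg_walk h 0 u}"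

lemma has_sum_walk_weight: "(word_weight p q has_sum walk_weight h) {u. nonneg_walk h 0 u}"
  unfolding walk_weight_def using summable_on_walks by simp

lemma walk_weight_bounds: "0 \<le> walk_weight h" "walk_weight h \<le> 1 / p"
  unfolding walk_weight_def
  by (auto simp: word_weight_nonneg intro: infsum_nonneg
      infsum_le_finite_sums[OF summable_on_walks sum_word_weight_walks_le])

lemma walk_weight_rec:
  "walk_weight h = of_bool (h = 0) + q * walk_weight (Suc h) + (if 0 < h then p * walk_weight (h - 1) else 0)"
proof -
  have up: "((\<lambda>u. word_weight p q (True # u)) has_sum q * walk_weight (Suc h)) {u. True # u \<in> {u. nonneg_walk h 0 u}}"
    using has_sum_cmult_right[OF has_sum_walk_weight[of "Suc h"], of q] by simp
  have down: "((\<lambda>u. word_weight p q (False # u)) has_sum (if 0 < h then p * walk_weight (h - 1) else 0))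
      {u. False # u \<in> {u. nonneg_walk h 0 u}}"
    using has_sum_cmult_right[OF has_sum_walk_weight[of "h - 1"], of p] by simp
  show ?thesis
    using has_sum_unique[OF has_sum_walk_weight has_sum_bool_list_split[OF up down]] by simp
qed

lemma walk_weight_eq: "walk_weight h = 1 / p"
proof -
  have step: "walk_weight (Suc (Suc n)) - walk_weight (Suc n) = p / q * (walk_weight (Suc n) - walk_weight n)" for n
    using walk_weight_rec[of "Suc n"] q_pos by (simp add: q_eq_1_minus_p field_simps)
  have "\<bar>walk_weight n\<bar> \<le> 1 / p" for n
    using walk_weight_bounds[of n] by simp
  then have const: "walk_weight h = walk_weight 0" for h
    using q_less_p q_pos step by (intro bounded_geometric_increments_imp_const[where r = "p / q" and B = "1 / p"]) auto
  have "walk_weight 0 = 1 + q * walk_weight 0"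
    using walk_weight_rec[of 0] const[of 1] by simp
  then show ?thesis
    using const[of h] p_pos by (simp add: q_eq_1_minus_p field_simps)
qed

lemma has_sum_walks: "(word_weight p q has_sum 1 / p) {u. nonneg_walk h 0 u}"
  using has_sum_walk_weight[of h] by (simp add: walk_weight_eq)

lemma has_sum_dyck_ends_with_H: "(word_weight p q has_sum q ^ j / p) {v. dyck v \<and> ends_with_H j v}"
proof -
  define \<phi> where "\<phi> a = rev (map Not a) @ replicate j False" for a
  have inj: "inj_on \<phi> {a. nonneg_walk j 0 a}"
    by (rule inj_onI) (metis \<phi>_def append_same_eq rev_map_Not_involution)
  have image: "{v. dyck v \<and> ends_with_H j v} = \<phi> ` {a. nonneg_walk j 0 a}"
  proof (intro set_eqI iffI)
    fix v assume "v \<in> {v. dyck v \<and> ends_with_H j v}"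
    then obtain a where "v = a @ replicate j False" "nonneg_walk 0 j a"
      by (auto simp: ends_with_H_def dyck_iff_nonneg_walk nonneg_walk_append nonneg_walk_replicate)
    then show "v \<in> \<phi> ` {a. nonneg_walk j 0 a}"
      by (intro image_eqI[of _ _ "rev (map Not a)"]) (auto simp: \<phi>_def nonneg_walk_rev_map_Not)
  next
    fix v assume "v \<in> \<phi> ` {a. nonneg_walk j 0 a}"
    then show "v \<in> {v. dyck v \<and> ends_with_H j v}"
      using nonneg_walk_rev_map_Not[of 0 j]
      by (auto simp: \<phi>_def ends_with_H_def dyck_iff_nonneg_walk nonneg_walk_append nonneg_walk_replicate)
  qed
  have weight: "word_weight p q (\<phi> a) = q ^ j * word_weight p q a" if "nonneg_walk j 0 a" for a
  proof -
    have "count_H a = count_S a + j"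
      using that by (simp add: nonneg_walk_iff_counts)
    then show ?thesis by (simp add: \<phi>_def word_weight_def power_add)
  qed
  have "((\<lambda>a. q ^ j * word_weight p q a) has_sum q ^ j * (1 / p)) {a. nonneg_walk j 0 a}"
    by (rule has_sum_cmult_right[OF has_sum_walks])
  then have "((word_weight p q \<circ> \<phi>) has_sum q ^ j / p) {a. nonneg_walk j 0 a}"
    by (subst has_sum_cong[where g = "\<lambda>a. q ^ j * word_weight p q a"]) (auto simp: weight)
  then show ?thesis
    unfolding image by (subst has_sum_reindex[OF inj])
qed

lemma dyck_ends_with_H_count_H_eq:
  "{v. dyck v \<and> ends_with_H j v \<and> count_H v = j} = {replicate j True @ replicate j False}"
proof (intro set_eqI iffI)
  fix v assume "v \<in> {v. dyck v \<and> ends_with_H j v \<and> count_H v = j}"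
  then have "dyck v" "ends_with_H j v" "count_H v = j" by auto
  then obtain a where v: "v = a @ replicate j False"
    by (auto simp: ends_with_H_def)
  with \<open>dyck v\<close> \<open>count_H v = j\<close> have "nonneg_walk 0 j a" "count_H v = j"
    by (auto simp: dyck_iff_nonneg_walk nonneg_walk_append nonneg_walk_replicate)
  then have "count_H a = 0" "count_S a = j"
    using v by (auto simp: nonneg_walk_iff_counts)
  then show "v \<in> {replicate j True @ replicate j False}"
    using count_H_eq_0_imp_replicate v by auto
qed (auto simp: ends_with_H_def dyck_iff_nonneg_walk nonneg_walk_append nonneg_walk_replicate)

lemma has_sum_dyck_staircase:
  "(word_weight p q has_sum (p * q) ^ j) {v. dyck v \<and> ends_with_H j v \<and> count_H v = j}"
  unfolding dyck_ends_with_H_count_H_eq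
  by (rule has_sum_finiteI) (simp_all add: word_weight_def power_mult_distrib mult.commute)

lemma fork_uncle_series_eq:
  "q^2 * p * (\<Sum>j<N. \<gamma> * (q ^ j / p) + (1 - \<gamma>) * (p * q) ^ j)
     = (q^2 / p) * (1 - q^N) * \<gamma> + (1 - \<gamma>) * p * q^2 * (1 - (p * q)^N) / (1 - p * q)"
proof -
  have pq_less_1: "p * q < 1"
    using mult_strict_mono[of p 1 q 1] p_pos q_pos p_plus_q by simp
  have "(\<Sum>j<N. \<gamma> * (q ^ j / p) + (1 - \<gamma>) * (p * q) ^ j)
      = \<gamma> / p * (\<Sum>j<N. q ^ j) + (1 - \<gamma>) * (\<Sum>j<N. (p * q) ^ j)"
    by (simp add: sum.distrib sum_distrib_left)
  also have "\<dots> = \<gamma> / p * ((1 - q ^ N) / p) + (1 - \<gamma>) * ((1 - (p * q) ^ N) / (1 - p * q))"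
    using q_less_p pq_less_1 p_plus_q by (simp add: sum_gp_strict q_eq_1_minus_p)
  finally have geometric: "(\<Sum>j<N. \<gamma> * (q ^ j / p) + (1 - \<gamma>) * (p * q) ^ j)
      = \<gamma> / p * ((1 - q ^ N) / p) + (1 - \<gamma>) * ((1 - (p * q) ^ N) / (1 - p * q))" .
  show ?thesis
    unfolding geometric using p_pos pq_less_1 by (simp add: field_simps power2_eq_square)
qed

end

section \<open>The distribution of attack cycles\<close>

definition coin_prob :: "real \<Rightarrow> bool list \<Rightarrow> real" where
  "coin_prob \<gamma> c = (\<Prod>b\<leftarrow>c. if b then \<gamma> else 1 - \<gamma>)"

lemma coin_prob_simps [simp]:
  "coin_prob \<gamma> [] = 1" "coin_prob \<gamma> (True # c) = \<gamma> * coin_prob \<gamma> c"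
  "coin_prob \<gamma> (False # c) = (1 - \<gamma>) * coin_prob \<gamma> c"
  by (auto simp: coin_prob_def)

lemma coin_prob_nonneg: "0 \<le> \<gamma> \<Longrightarrow> \<gamma> \<le> 1 \<Longrightarrow> 0 \<le> coin_prob \<gamma> c"
  unfolding coin_prob_def by (induction c) auto

lemma sum_coin_prob: "(\<Sum>c | length c = n. coin_prob \<gamma> c) = 1"
proof (induction n)
  case 0
  have "{c :: bool list. length c = 0} = {[]}" by auto
  then show ?case by simp
qed (simp add: sum_bool_lists_length_Suc sum_distrib_left[symmetric])

lemma sum_coin_prob_nth: "j < n \<Longrightarrow> (\<Sum>c | length c = n. coin_prob \<gamma> c * of_bool (c ! j)) = \<gamma>"
proof (induction n arbitrary: j)
  case (Suc n)
  show ?case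
  proof (cases j)
    case 0
    then show ?thesis by (simp add: sum_bool_lists_length_Suc sum_distrib_left[symmetric] sum_coin_prob)
  next
    case (Suc i)
    let ?S = "\<Sum>c | length c = n. coin_prob \<gamma> c * of_bool (c ! i)"
    have "(\<Sum>c | length c = Suc n. coin_prob \<gamma> c * of_bool (c ! j)) = \<gamma> * ?S + (1 - \<gamma>) * ?S"
      by (simp add: Suc sum_bool_lists_length_Suc mult.assoc sum_distrib_left)
    also have "?S = \<gamma>"
      using Suc.IH Suc.prems by (simp add: \<open>j = Suc i\<close>)
    finally show ?thesis by (simp add: algebra_simps)
  qed
qed simp

lemma sum_coin_prob_not_nth: "j < n \<Longrightarrow> (\<Sum>c | length c = n. coin_prob \<gamma> c * of_bool (\<not> c ! j)) = 1 - \<gamma>"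
  using sum_coin_prob_nth[where j = j and n = n and \<gamma> = \<gamma>] sum_coin_prob[where n = n and \<gamma> = \<gamma>]
  by (simp add: of_bool_not_iff algebra_simps sum_subtractf)

lemma outcome_prob_Pair:
  "outcome_prob p q \<gamma> (w, c) = (if length c = count_H w then cycle_prob p q w * coin_prob \<gamma> c else 0)"
  by (simp add: outcome_prob_def coin_prob_def)

lemma outcome_prob_nonneg: "0 \<le> p \<Longrightarrow> 0 \<le> q \<Longrightarrow> 0 \<le> \<gamma> \<Longrightarrow> \<gamma> \<le> 1 \<Longrightarrow> 0 \<le> outcome_prob p q \<gamma> \<omega>"
  by (cases \<omega>) (simp add: outcome_prob_Pair cycle_prob_def coin_prob_nonneg)

lemma valid_cycle_if_outcome_prob_nonzero: "outcome_prob p q \<gamma> (w, c) \<noteq> 0 \<Longrightarrow> valid_cycle w"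
  by (auto simp: outcome_prob_Pair cycle_prob_def split: if_splits)

definition coin_expectation :: "real \<Rightarrow> (bool list \<times> bool list \<Rightarrow> real) \<Rightarrow> bool list \<Rightarrow> real" where
  "coin_expectation \<gamma> f w = (\<Sum>c | length c = count_H w. coin_prob \<gamma> c * f (w, c))"

lemma has_sum_outcome_prob_coin_expectation:
  assumes "0 \<le> p" "0 \<le> q" "0 \<le> \<gamma>" "\<gamma> \<le> 1" "\<And>\<omega>. 0 \<le> f \<omega>"
    and "((\<lambda>w. cycle_prob p q w * coin_expectation \<gamma> f w) has_sum s) UNIV"
  shows "((\<lambda>\<omega>. outcome_prob p q \<gamma> \<omega> * f \<omega>) has_sum s) UNIV"
proof -
  let ?F = "\<lambda>\<omega>. outcome_prob p q \<gamma> \<omega> * f \<omega>" and ?C = "\<lambda>w. {c. length c = count_H w}"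
  have "(?F has_sum s) (Sigma UNIV ?C)"
  proof (rule has_sum_Sigma_nonneg[OF _ _ assms(6)])
    show "0 \<le> ?F \<omega>" for \<omega>
      using assms outcome_prob_nonneg by simp
    show "((\<lambda>c. ?F (w, c)) has_sum cycle_prob p q w * coin_expectation \<gamma> f w) (?C w)" for w
      by (rule has_sum_finiteI) (auto simp: finite_bool_lists_length outcome_prob_Pair coin_expectation_def
          sum_distrib_left mult.assoc intro!: sum.cong)
  qed
  then show ?thesis
    by (subst has_sum_cong_neutral[where T = "Sigma UNIV ?C" and g = ?F])
       (auto simp: outcome_prob_Pair split: if_splits)
qed

definition fork_word :: "bool list \<Rightarrow> bool list" where
  "fork_word v = True # True # v @ [False]"

lemma valid_cycle_iff:
  "valid_cycle w \<longleftrightarrow> w \<in> {[False], [True, False, True], [True, False, False]} \<union> fork_word ` {v. dyck v}"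
  by (auto simp: valid_cycle_def fork_word_def)

lemma ends_with_H_Suc_fork_word: "ends_with_H (Suc j) (fork_word v) \<longleftrightarrow> ends_with_H j v"
  by (simp add: fork_word_def ends_with_H_Suc_snoc[where b = False, simplified] ends_with_H_Cons_True)

lemma has_sum_cycle_prob:
  assumes "((\<lambda>v. q^2 * p * word_weight p q v * g (fork_word v)) has_sum s) {v. dyck v}"
  shows "((\<lambda>w. cycle_prob p q w * g w) has_sum
           p * g [False] + p * q^2 * g [True, False, True] + p^2 * q * g [True, False, False] + s) UNIV"
proof -
  let ?F = "\<lambda>w. cycle_prob p q w * g w" and ?short = "{[False], [True, False, True], [True, False, False]}"
  have short: "(?F has_sum p * g [False] + p * q^2 * g [True, False, True] + p^2 * q * g [True, False, False]) ?short"
    by (rule has_sum_finiteI) (auto simp: cycle_prob_def valid_cycle_def count_S_def count_H_def power2_eq_square)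
  have inj: "inj_on fork_word {v. dyck v}"
    by (rule inj_onI) (simp add: fork_word_def)
  have "cycle_prob p q (fork_word v) = q^2 * p * word_weight p q v" if "dyck v" for v
    using that by (simp add: cycle_prob_def valid_cycle_iff word_weight_def fork_word_def power_add power2_eq_square)
  then have long: "(?F has_sum s) (fork_word ` {v. dyck v})"
    by (subst has_sum_reindex[OF inj]) (rule has_sum_cong[THEN iffD2, OF _ assms], simp)
  have "(?F has_sum p * g [False] + p * q^2 * g [True, False, True] + p^2 * q * g [True, False, False] + s)
      (?short \<union> fork_word ` {v. dyck v})"
    by (rule has_sum_Un_disjoint[OF short long]) (auto simp: fork_word_def)
  then show ?thesis
    by (subst has_sum_cong_neutral[where T = "?short \<union> fork_word ` {v. dyck v}" and g = ?F])
       (auto simp: cycle_prob_def valid_cycle_iff simp del: insert_iff Un_iff)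
qed

section \<open>Blocks of a cycle and their referral\<close>

definition attacker_wins :: "bool list \<Rightarrow> bool" where
  "attacker_wins w \<longleftrightarrow> w = [True, False, True] \<or> (\<exists>v. dyck v \<and> w = fork_word v)"

lemma valid_cycle_cases: "valid_cycle w \<longleftrightarrow> w = [False] \<or> w = [True, False, False] \<or> attacker_wins w"
  by (auto simp: valid_cycle_iff attacker_wins_def)

lemma attacker_wins_first_letter:
  "attacker_wins w \<Longrightarrow> w \<noteq> [False] \<and> w \<noteq> [True, False, False] \<and> 0 < length w \<and> w ! 0"
  by (auto simp: attacker_wins_def fork_word_def)

lemma attacker_wins_fork_word: "dyck v \<Longrightarrow> attacker_wins (fork_word v)"
  by (auto simp: attacker_wins_def)

lemma attacker_wins_nonneg_walk: "attacker_wins w \<Longrightarrow> nonneg_walk 0 1 w"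
  using nonneg_walk_shift[of 0 0 _ 2]
  by (auto simp: attacker_wins_def fork_word_def dyck_iff_nonneg_walk nonneg_walk_snoc)

lemma attacker_wins_counts:
  assumes "attacker_wins w"
  shows "count_S w = Suc (count_H w)" "m \<le> length w \<Longrightarrow> count_H (take m w) \<le> count_S (take m w)"
  using attacker_wins_nonneg_walk[OF assms] by (auto simp: nonneg_walk_iff_counts)

lemma attacker_block_higher_than_earlier_honest:
  assumes "attacker_wins w" "k < k'" "k' < length w" "w ! k'"
  shows "count_H (take (Suc k) w) < count_S (take (Suc k') w)"
proof -
  have "count_H (take (Suc k) w) \<le> count_S (take (Suc k) w)"
    using assms by (intro attacker_wins_counts) auto
  also have "\<dots> \<le> count_S (take k' w)"
    using assms by (intro count_S_take_mono) simp
  also have "\<dots> < count_S (take (Suc k') w)"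
    using assms by (simp add: count_S_take_Suc)
  finally show ?thesis .
qed

definition fork_block :: "bool list \<Rightarrow> bool list \<Rightarrow> nat \<Rightarrow> blk" where
  "fork_block w c k = (if w ! k then
       \<lparr>honest = False, height = count_S (take (Suc k) w), mined = k, published = k,
        official = True, parent_official = True\<rparr>
     else
       \<lparr>honest = True, height = count_H (take (Suc k) w), mined = k, published = k,
        official = False,
        parent_official = (count_H (take (Suc k) w) = 1 \<or> c ! (count_H (take (Suc k) w) - 1))\<rparr>)"

lemma fork_block_simps [simp]:
  "honest (fork_block w c k) \<longleftrightarrow> \<not> w ! k" "official (fork_block w c k) \<longleftrightarrow> w ! k"
  "height (fork_block w c k) = (if w ! k then count_S (take (Suc k) w) else count_H (take (Suc k) w))"
  "mined (fork_block w c k) = k" "published (fork_block w c k) = k"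
  "parent_official (fork_block w c k) \<longleftrightarrow>
     w ! k \<or> count_H (take (Suc k) w) = 1 \<or> c ! (count_H (take (Suc k) w) - 1)"
  by (auto simp: fork_block_def)

lemma shift_blk_simps [simp]:
  "honest (shift_blk dh dt b) = honest b" "official (shift_blk dh dt b) = official b"
  "height (shift_blk dh dt b) = height b + dh" "mined (shift_blk dh dt b) = mined b + dt"
  "published (shift_blk dh dt b) = published b + dt"
  "parent_official (shift_blk dh dt b) = parent_official b"
  by (auto simp: shift_blk_def)

lemma cycle_blocks_attacker_wins:
  "attacker_wins w \<Longrightarrow> cycle_blocks w c = map (fork_block w c) [0..<length w]"
  using attacker_wins_first_letter[of w] by (simp add: cycle_blocks_def fork_blocks_def fork_block_def)

fun honest_first_block :: "bool list \<times> bool list \<Rightarrow> bool" where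
  "honest_first_block (w, c) \<longleftrightarrow> w = [False] \<or> (w = [True, False, False] \<and> \<not> c ! 1)"

lemma cycle_blocks_height_ge_1:
  assumes "valid_cycle w" "b \<in> set (cycle_blocks w c)"
  shows "1 \<le> height b"
  using assms by (auto simp: valid_cycle_cases cycle_blocks_attacker_wins count_S_take_Suc count_H_take_Suc)
    (auto simp: cycle_blocks_def split: if_splits)

lemma cycle_blocks_official_height_1:
  assumes "valid_cycle w"
  shows "\<exists>b\<in>set (cycle_blocks w c). official b \<and> height b = 1"
proof (cases "attacker_wins w")
  case True
  then have "fork_block w c 0 \<in> set (cycle_blocks w c)" "official (fork_block w c 0)"
    "height (fork_block w c 0) = 1"
    using attacker_wins_first_letter[OF True] by (auto simp: cycle_blocks_attacker_wins take_Suc_conv_app_nth)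
  then show ?thesis by blast
qed (use assms in \<open>auto simp: valid_cycle_cases cycle_blocks_def\<close>)

lemma honest_first_block_iff:
  assumes "valid_cycle w"
  shows "honest_first_block (w, c) \<longleftrightarrow> (\<exists>b\<in>set (cycle_blocks w c). honest b \<and> official b \<and> height b = 1)"
proof (cases "attacker_wins w")
  case True
  then show ?thesis
    using attacker_wins_first_letter[OF True] by (auto simp: cycle_blocks_attacker_wins)
qed (use assms in \<open>auto simp: valid_cycle_cases cycle_blocks_def\<close>)

definition two_cycle_blocks :: "bool list \<Rightarrow> bool list \<Rightarrow> bool list \<Rightarrow> bool list \<Rightarrow> blk list" where
  "two_cycle_blocks w c w' c' = cycle_blocks w c @ map (shift_blk (growth w) (length w)) (cycle_blocks w' c')"

definition honest_referred :: "nat \<Rightarrow> blk list \<Rightarrow> blk \<Rightarrow> bool" where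
  "honest_referred n1 B u \<longleftrightarrow> is_uncle u \<and>
     (\<exists>b\<in>set B. can_refer n1 b u \<and> honest b \<and> (\<forall>b'\<in>set B. can_refer n1 b' u \<longrightarrow> height b \<le> height b'))"

lemma U_h_eq_honest_referred:
  "U_h n1 (w, c) (w', c') = length (filter (honest_referred n1 (two_cycle_blocks w c w' c')) (cycle_blocks w c))"
  unfolding U_h_def honest_referred_def two_cycle_blocks_def by simp

lemma honest_referredI:
  assumes "is_uncle u" "b \<in> set B" "can_refer n1 b u" "honest b" "height b = Suc (height u)"
  shows "honest_referred n1 B u"
  using assms by (auto simp: honest_referred_def can_refer_def)

lemma U_h_H: "U_h n1 ([False], c) (w', c') = 0"
  by (simp add: U_h_eq_honest_referred cycle_blocks_def honest_referred_def is_uncle_def)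

lemma U_h_SHH:
  assumes "1 \<le> n1"
  shows "U_h n1 ([True, False, False], c) (w', c') = 1"
proof -
  let ?L = "cycle_blocks [True, False, False] c"
  have "honest_referred n1 (two_cycle_blocks [True, False, False] c w' c') u \<longleftrightarrow> is_uncle u"
    if "u \<in> set ?L" for u
  proof
    assume "is_uncle u"
    with that have "height u = 1" "published u = 1"
      by (auto simp: cycle_blocks_def is_uncle_def split: if_splits)
    moreover have "?L ! 2 \<in> set (two_cycle_blocks [True, False, False] c w' c')"
      by (simp add: two_cycle_blocks_def cycle_blocks_def)
    ultimately show "honest_referred n1 (two_cycle_blocks [True, False, False] c w' c') u"
      using \<open>is_uncle u\<close> assms
      by (intro honest_referredI[where b = "?L ! 2"]) (auto simp: cycle_blocks_def can_refer_def)
  qed (simp add: honest_referred_def)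
  then have "U_h n1 ([True, False, False], c) (w', c') = length (filter is_uncle ?L)"
    by (simp add: U_h_eq_honest_referred cong: filter_cong)
  then show ?thesis
    by (simp add: cycle_blocks_def is_uncle_def)
qed

(* The first block of the next cycle has height count_S w + 1. *)
definition referable_by_next_cycle :: "nat \<Rightarrow> bool list \<Rightarrow> bool list \<Rightarrow> nat \<Rightarrow> bool" where
  "referable_by_next_cycle n1 w c k \<longleftrightarrow> is_uncle (fork_block w c k) \<and>
     (\<forall>k'. k < k' \<and> k' < length w \<longrightarrow> \<not> w ! k') \<and> count_S w + 1 \<le> height (fork_block w c k) + n1"

lemma set_two_cycle_blocks_attacker_wins:
  "attacker_wins w \<Longrightarrow> set (two_cycle_blocks w c w' c') =
     fork_block w c ` {..<length w} \<union> shift_blk (count_S w) (length w) ` set (cycle_blocks w' c')"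
  using attacker_wins_first_letter[of w]
  by (auto simp: two_cycle_blocks_def cycle_blocks_attacker_wins growth_def)

lemma fork_block_height_lt_count_S:
  "attacker_wins w \<Longrightarrow> \<not> w ! k \<Longrightarrow> height (fork_block w c k) < count_S w"
  using count_H_take_le[of "Suc k" w] attacker_wins_counts(1)[of w] by simp

lemma later_attacker_block_can_refer:
  assumes "attacker_wins w" "\<not> w ! k" "k < k'" "k' < length w" "w ! k'"
    and "count_S w + 1 \<le> height (fork_block w c k) + n1"
  shows "can_refer n1 (fork_block w c k') (fork_block w c k)"
proof -
  have "height (fork_block w c k) < height (fork_block w c k')"
    using attacker_block_higher_than_earlier_honest[OF assms(1,3-5)] assms(2,5) by simp
  moreover have "height (fork_block w c k') \<le> count_S w"
    using assms(5) count_S_take_le by simp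
  ultimately show ?thesis
    using assms by (simp add: can_refer_def)
qed

lemma honest_referred_fork_blockD:
  assumes w: "attacker_wins w" and w': "valid_cycle w'" and k: "k < length w"
    and referred: "honest_referred n1 (two_cycle_blocks w c w' c') (fork_block w c k)"
  shows "referable_by_next_cycle n1 w c k \<and> honest_first_block (w', c')"
proof -
  let ?u = "fork_block w c k" and ?B = "two_cycle_blocks w c w' c'"
    and ?shift = "shift_blk (count_S w) (length w)"
  obtain b where uncle: "is_uncle ?u" and b: "b \<in> set ?B" "can_refer n1 b ?u" "honest b"
    and lowest: "\<And>b'. b' \<in> set ?B \<Longrightarrow> can_refer n1 b' ?u \<Longrightarrow> height b \<le> height b'"
    using referred by (auto simp: honest_referred_def)
  have wk: "\<not> w ! k" using uncle by (simp add: is_uncle_def)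
  have "official b" using b by (simp add: can_refer_def)
  then obtain b0 where b0: "b0 \<in> set (cycle_blocks w' c')" and b_eq: "b = ?shift b0"
    using b set_two_cycle_blocks_attacker_wins[OF w] by auto
  have b0_height: "1 \<le> height b0"
    using cycle_blocks_height_ge_1[OF w' b0] .
  have reach: "height b0 + count_S w \<le> height ?u + n1"
    using b by (simp add: can_refer_def b_eq)
  obtain a0 where a0: "a0 \<in> set (cycle_blocks w' c')" "official a0" "height a0 = 1"
    using cycle_blocks_official_height_1[OF w'] by blast
  have "can_refer n1 (?shift a0) ?u"
    using a0 k reach b0_height fork_block_height_lt_count_S[OF w wk] by (simp add: can_refer_def)
  then have "height b \<le> height (?shift a0)"
    using a0 set_two_cycle_blocks_attacker_wins[OF w] by (intro lowest) auto
  then have "height b0 = 1" using b0_height a0 by (simp add: b_eq)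
  then have first: "honest_first_block (w', c')"
    using honest_first_block_iff[OF w'] b0 b \<open>official b\<close> by (auto simp: b_eq)
  have trailing: "\<not> w ! k'" if "k < k'" "k' < length w" for k'
  proof
    assume wk': "w ! k'"
    then have "can_refer n1 (fork_block w c k') ?u"
      using later_attacker_block_can_refer[OF w wk that wk'] reach b0_height by simp
    then have "height b \<le> height (fork_block w c k')"
      using that set_two_cycle_blocks_attacker_wins[OF w] by (intro lowest) auto
    then show False
      using wk' count_S_take_le[of "Suc k'" w] b0_height by (simp add: b_eq)
  qed
  show ?thesis
    using uncle trailing reach b0_height first by (simp add: referable_by_next_cycle_def)
qed

lemma honest_referred_fork_blockI:
  assumes w: "attacker_wins w" and w': "valid_cycle w'" and k: "k < length w"
    and referable: "referable_by_next_cycle n1 w c k" and first: "honest_first_block (w', c')"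
  shows "honest_referred n1 (two_cycle_blocks w c w' c') (fork_block w c k)"
proof -
  let ?u = "fork_block w c k" and ?B = "two_cycle_blocks w c w' c'"
    and ?shift = "shift_blk (count_S w) (length w)"
  have uncle: "is_uncle ?u" and trailing: "\<And>k'. k < k' \<Longrightarrow> k' < length w \<Longrightarrow> \<not> w ! k'"
    and reach: "count_S w + 1 \<le> height ?u + n1"
    using referable by (auto simp: referable_by_next_cycle_def)
  have wk: "\<not> w ! k" using uncle by (simp add: is_uncle_def)
  obtain b0 where b0: "b0 \<in> set (cycle_blocks w' c')" "honest b0" "official b0" "height b0 = 1"
    using first honest_first_block_iff[OF w'] by blast
  have "?shift b0 \<in> set ?B"
    using b0 set_two_cycle_blocks_attacker_wins[OF w] by blast
  moreover have "can_refer n1 (?shift b0) ?u"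
    using b0 k reach fork_block_height_lt_count_S[OF w wk] by (simp add: can_refer_def)
  moreover have "height (?shift b0) \<le> height b'" if "b' \<in> set ?B" "can_refer n1 b' ?u" for b'
  proof -
    from that(1) consider k' where "k' < length w" "b' = fork_block w c k'"
      | b0' where "b0' \<in> set (cycle_blocks w' c')" "b' = ?shift b0'"
      using set_two_cycle_blocks_attacker_wins[OF w] by auto
    then show ?thesis
    proof cases
      case 1
      then show ?thesis using that(2) trailing[of k'] by (auto simp: can_refer_def)
    next
      case 2
      then show ?thesis using cycle_blocks_height_ge_1[OF w'] b0 by auto
    qed
  qed
  ultimately show ?thesis
    using uncle b0 by (auto simp: honest_referred_def)
qed

lemma U_h_attacker_wins:
  assumes w: "attacker_wins w" and w': "valid_cycle w'"
  shows "U_h n1 (w, c) (w', c') =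
    card {k. k < length w \<and> referable_by_next_cycle n1 w c k} * of_bool (honest_first_block (w', c'))"
proof -
  let ?B = "two_cycle_blocks w c w' c'"
  have "U_h n1 (w, c) (w', c') = length (filter (honest_referred n1 ?B) (map (fork_block w c) [0..<length w]))"
    by (simp add: U_h_eq_honest_referred cycle_blocks_attacker_wins[OF w])
  also have "\<dots> = card {k. k < length w \<and> honest_referred n1 ?B (fork_block w c k)}"
    by (simp add: length_filter_map distinct_length_filter Int_def conj_commute)
  also have "{k. k < length w \<and> honest_referred n1 ?B (fork_block w c k)} =
      {k. k < length w \<and> referable_by_next_cycle n1 w c k \<and> honest_first_block (w', c')}"
    using honest_referred_fork_blockD[OF w w'] honest_referred_fork_blockI[OF w w'] by blast
  finally show ?thesis by simp
qed

fun fork_uncles :: "nat \<Rightarrow> bool list \<times> bool list \<Rightarrow> nat" where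
  "fork_uncles n1 (w, c) =
     (if attacker_wins w then card {k. k < length w \<and> referable_by_next_cycle n1 w c k} else 0)"

lemma U_h_decomposition:
  assumes "valid_cycle w" "valid_cycle w'" "1 \<le> n1"
  shows "U_h n1 (w, c) (w', c') =
    of_bool (w = [True, False, False]) + fork_uncles n1 (w, c) * of_bool (honest_first_block (w', c'))"
  using assms attacker_wins_first_letter[of w]
  by (auto simp: valid_cycle_cases U_h_H U_h_SHH U_h_attacker_wins attacker_wins_def fork_word_def)

lemma outcome_prob_U_h_decomposition:
  assumes "1 \<le> n1"
  shows "outcome_prob p q \<gamma> \<omega> * outcome_prob p q \<gamma> \<omega>' * real (U_h n1 \<omega> \<omega>') =
    outcome_prob p q \<gamma> \<omega> * of_bool (fst \<omega> = [True, False, False]) * outcome_prob p q \<gamma> \<omega>'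
    + outcome_prob p q \<gamma> \<omega> * real (fork_uncles n1 \<omega>) * (outcome_prob p q \<gamma> \<omega>' * of_bool (honest_first_block \<omega>'))"
proof (cases "outcome_prob p q \<gamma> \<omega> = 0 \<or> outcome_prob p q \<gamma> \<omega>' = 0")
  case False
  obtain w c w' c' where \<omega>: "\<omega> = (w, c)" "\<omega>' = (w', c')" by fastforce
  have "valid_cycle w" "valid_cycle w'"
    using False valid_cycle_if_outcome_prob_nonzero by (auto simp: \<omega>)
  then show ?thesis
    using assms by (simp add: \<omega> U_h_decomposition algebra_simps)
qed auto

lemma last_letters_H_iff:
  assumes "j < length w"
  shows "(\<not> w ! (length w - Suc j) \<and> (\<forall>k'. length w - Suc j < k' \<and> k' < length w \<longrightarrow> \<not> w ! k'))
    \<longleftrightarrow> ends_with_H (Suc j) w"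
proof -
  have "(\<not> w ! (length w - Suc j) \<and> (\<forall>k'. length w - Suc j < k' \<and> k' < length w \<longrightarrow> \<not> w ! k'))
      \<longleftrightarrow> (\<forall>i. length w - Suc j \<le> i \<and> i < length w \<longrightarrow> \<not> w ! i)"
  proof (intro iffI allI impI)
    fix i assume "\<not> w ! (length w - Suc j) \<and> (\<forall>k'. length w - Suc j < k' \<and> k' < length w \<longrightarrow> \<not> w ! k')"
      and "length w - Suc j \<le> i \<and> i < length w"
    then show "\<not> w ! i" by (cases "i = length w - Suc j") auto
  qed (use assms in auto)
  then show ?thesis
    using assms by (simp add: ends_with_H_iff_nth)
qed

lemma count_H_take_ends_with_H:
  assumes "ends_with_H (Suc j) w"
  shows "count_H (take (Suc (length w - Suc j)) w) = count_H w - j"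
proof -
  obtain a where a: "w = a @ replicate (Suc j) False"
    using assms unfolding ends_with_H_def by blast
  then have "take (Suc (length w - Suc j)) w = a @ [False]" by simp
  then show ?thesis using arg_cong[OF a, of count_H] by simp
qed

lemma referable_fork_word_iff:
  assumes v: "dyck v" and j: "j < length (fork_word v)" and n1: "2 \<le> n1"
  shows "referable_by_next_cycle n1 (fork_word v) c (length (fork_word v) - Suc j) \<longleftrightarrow>
    j < n1 - 1 \<and> ends_with_H j v \<and> (j = count_H v \<or> c ! (count_H v - j))"
proof -
  let ?w = "fork_word v"
  let ?k = "length ?w - Suc j"
  have trailing: "(\<not> ?w ! ?k \<and> (\<forall>k'. ?k < k' \<and> k' < length ?w \<longrightarrow> \<not> ?w ! k')) \<longleftrightarrow> ends_with_H j v"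
    using last_letters_H_iff[OF j] by (simp add: ends_with_H_Suc_fork_word)
  have height: "count_H (take (Suc ?k) ?w) = count_H v + 1 - j" if "ends_with_H j v"
  proof -
    have "count_H (take (Suc ?k) ?w) = count_H ?w - j"
      using that by (intro count_H_take_ends_with_H) (simp add: ends_with_H_Suc_fork_word)
    then show ?thesis by (simp add: fork_word_def)
  qed
  have counts: "count_S ?w = count_H v + 2"
    using v by (simp add: fork_word_def dyck_def)
  show ?thesis
  proof (cases "ends_with_H j v")
    case True
    then have "j \<le> count_H v" by (rule ends_with_H_le_count_H)
    then show ?thesis
      using trailing True height[OF True] counts n1
      by (auto simp: referable_by_next_cycle_def is_uncle_def)
  next
    case False
    then show ?thesis using trailing by (auto simp: referable_by_next_cycle_def is_uncle_def)
  qed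
qed

lemma card_referable_fork_word:
  assumes v: "dyck v" and n1: "2 \<le> n1"
  shows "card {k. k < length (fork_word v) \<and> referable_by_next_cycle n1 (fork_word v) c k} =
    card {j. j < n1 - 1 \<and> ends_with_H j v \<and> (j = count_H v \<or> c ! (count_H v - j))}"
proof -
  let ?n = "length (fork_word v)"
  let ?Q = "\<lambda>j. j < n1 - 1 \<and> ends_with_H j v \<and> (j = count_H v \<or> c ! (count_H v - j))"
  have short: "j < ?n" if "?Q j" for j
    using that ends_with_H_le_count_H[of j v] count_S_plus_count_H[of v] by (auto simp: fork_word_def)
  have involution: "?n - Suc (?n - Suc j) = j" if "?Q j" for j
    using short[OF that] by arith
  have "bij_betw (\<lambda>k. ?n - Suc k) {k. k < ?n \<and> referable_by_next_cycle n1 (fork_word v) c k} {j. ?Q j}"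
  proof (rule bij_betw_byWitness[where f' = "\<lambda>j. ?n - Suc j"])
    show "(\<lambda>k. ?n - Suc k) ` {k. k < ?n \<and> referable_by_next_cycle n1 (fork_word v) c k} \<subseteq> {j. ?Q j}"
    proof clarify
      fix k assume k: "k < ?n" "referable_by_next_cycle n1 (fork_word v) c k"
      then have "referable_by_next_cycle n1 (fork_word v) c (?n - Suc (?n - Suc k))"
        by (simp add: Suc_diff_Suc)
      then show "?Q (?n - Suc k)"
        using referable_fork_word_iff[OF v _ n1, of "?n - Suc k"] k by simp
    qed
    show "(\<lambda>j. ?n - Suc j) ` {j. ?Q j} \<subseteq> {k. k < ?n \<and> referable_by_next_cycle n1 (fork_word v) c k}"
      using referable_fork_word_iff[OF v _ n1] short by (auto simp: fork_word_def)
  qed (use short involution in auto)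
  then show ?thesis by (rule bij_betw_same_card)
qed

lemma coin_expectation_fork_uncles:
  assumes v: "dyck v" and n1: "2 \<le> n1"
  shows "coin_expectation \<gamma> (\<lambda>\<omega>. real (fork_uncles n1 \<omega>)) (fork_word v) =
    (\<Sum>j<n1 - 1. of_bool (ends_with_H j v) * (if j = count_H v then 1 else \<gamma>))"
proof -
  let ?C = "{c. length c = count_H (fork_word v)}"
  let ?E = "\<lambda>j c. ends_with_H j v \<and> (j = count_H v \<or> c ! (count_H v - j))"
  have count: "real (fork_uncles n1 (fork_word v, c)) = (\<Sum>j<n1 - 1. of_bool (?E j c))" for c
    by (simp only: fork_uncles.simps attacker_wins_fork_word[OF v] if_True
        card_referable_fork_word[OF v n1] of_nat_card_less_eq_sum)
  have "coin_expectation \<gamma> (\<lambda>\<omega>. real (fork_uncles n1 \<omega>)) (fork_word v) =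
      (\<Sum>c\<in>?C. coin_prob \<gamma> c * (\<Sum>j<n1 - 1. of_bool (?E j c)))"
    by (simp only: coin_expectation_def count)
  also have "\<dots> = (\<Sum>j<n1 - 1. \<Sum>c\<in>?C. coin_prob \<gamma> c * of_bool (?E j c))"
    unfolding sum_distrib_left by (rule sum.swap)
  also have "\<dots> = (\<Sum>j<n1 - 1. of_bool (ends_with_H j v) * (if j = count_H v then 1 else \<gamma>))"
  proof (rule sum.cong[OF refl])
    fix j
    have "count_H v - j < count_H (fork_word v)"
      by (simp add: fork_word_def)
    then show "(\<Sum>c\<in>?C. coin_prob \<gamma> c * of_bool (?E j c)) =
        of_bool (ends_with_H j v) * (if j = count_H v then 1 else \<gamma>)"
      using sum_coin_prob[where \<gamma> = \<gamma> and n = "count_H (fork_word v)"]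
        sum_coin_prob_nth[where \<gamma> = \<gamma> and n = "count_H (fork_word v)" and j = "count_H v - j"]
      by (cases "ends_with_H j v"; cases "j = count_H v") simp_all
  qed
  finally show ?thesis .
qed

lemma fork_uncles_SHS: "fork_uncles n1 ([True, False, True], c) = 0"
proof -
  have "\<not> referable_by_next_cycle n1 [True, False, True] c k" if "k < 3" for k
  proof -
    have "k = 0 \<or> k = 1 \<or> k = 2" using that by arith
    then show ?thesis
      by (auto simp: referable_by_next_cycle_def is_uncle_def dest: spec[of _ 2])
  qed
  then show ?thesis by (simp add: attacker_wins_def)
qed

section \<open>Expected numbers of uncles\<close>

context hashrates
begin

lemma has_sum_outcome_prob:
  assumes "0 \<le> \<gamma>" "\<gamma> \<le> 1"
  shows "(outcome_prob p q \<gamma> has_sum 1) UNIV"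
proof -
  have "((\<lambda>v. q^2 * p * word_weight p q v * 1) has_sum q^2) {v. dyck v}"
    using has_sum_cmult_right[OF has_sum_walks[of 0], of "q^2 * p"] p_pos
    by (simp add: dyck_iff_nonneg_walk)
  from has_sum_cycle_prob[where g = "\<lambda>_. 1", OF this]
  have "((\<lambda>w. cycle_prob p q w * coin_expectation \<gamma> (\<lambda>_. 1) w) has_sum 1) UNIV"
    by (simp add: coin_expectation_def sum_coin_prob q_eq_1_minus_p power2_eq_square algebra_simps)
  then show ?thesis
    using has_sum_outcome_prob_coin_expectation[where f = "\<lambda>_. 1"] assms p_pos q_pos by simp
qed

lemma has_sum_SHH:
  assumes "0 \<le> \<gamma>" "\<gamma> \<le> 1"
  shows "((\<lambda>\<omega>. outcome_prob p q \<gamma> \<omega> * of_bool (fst \<omega> = [True, False, False])) has_sum p^2 * q) UNIV"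
proof -
  let ?f = "\<lambda>\<omega>. of_bool (fst \<omega> = [True, False, False]) :: real"
  have "((\<lambda>v. q^2 * p * word_weight p q v * coin_expectation \<gamma> ?f (fork_word v)) has_sum 0) {v. dyck v}"
    by (simp add: coin_expectation_def fork_word_def)
  from has_sum_cycle_prob[OF this]
  have "((\<lambda>w. cycle_prob p q w * coin_expectation \<gamma> ?f w) has_sum p^2 * q) UNIV"
    by (simp add: coin_expectation_def sum_coin_prob)
  then show ?thesis
    using has_sum_outcome_prob_coin_expectation[of p q \<gamma> ?f] assms p_pos q_pos by simp
qed

lemma has_sum_honest_first_block:
  assumes "0 \<le> \<gamma>" "\<gamma> \<le> 1"
  shows "((\<lambda>\<omega>. outcome_prob p q \<gamma> \<omega> * of_bool (honest_first_block \<omega>)) has_sum p + (1 - \<gamma>) * p^2 * q) UNIV"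
proof -
  let ?f = "\<lambda>\<omega>. of_bool (honest_first_block \<omega>) :: real"
  have "((\<lambda>v. q^2 * p * word_weight p q v * coin_expectation \<gamma> ?f (fork_word v)) has_sum 0) {v. dyck v}"
    by (simp add: coin_expectation_def fork_word_def)
  from has_sum_cycle_prob[OF this]
  have "((\<lambda>w. cycle_prob p q w * coin_expectation \<gamma> ?f w) has_sum
      p * coin_expectation \<gamma> ?f [False] + p * q^2 * coin_expectation \<gamma> ?f [True, False, True]
      + p^2 * q * coin_expectation \<gamma> ?f [True, False, False] + 0) UNIV" .
  moreover have "coin_expectation \<gamma> ?f [False] = 1" "coin_expectation \<gamma> ?f [True, False, True] = 0"
    "coin_expectation \<gamma> ?f [True, False, False] = 1 - \<gamma>"
    using sum_coin_prob[where n = "Suc 0" and \<gamma> = \<gamma>]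
      sum_coin_prob_not_nth[where j = "Suc 0" and n = "Suc (Suc 0)" and \<gamma> = \<gamma>]
    by (simp_all add: coin_expectation_def)
  ultimately have "((\<lambda>w. cycle_prob p q w * coin_expectation \<gamma> ?f w) has_sum p + (1 - \<gamma>) * p^2 * q) UNIV"
    by (simp add: algebra_simps)
  then show ?thesis
    using has_sum_outcome_prob_coin_expectation[of p q \<gamma> ?f] assms p_pos q_pos by simp
qed

lemma has_sum_dyck_fork_uncle_term:
  "((\<lambda>v. word_weight p q v * (of_bool (ends_with_H j v) * (if j = count_H v then 1 else \<gamma>)))
     has_sum \<gamma> * (q ^ j / p) + (1 - \<gamma>) * (p * q) ^ j) {v. dyck v}"
proof -
  have "((\<lambda>v. \<gamma> * (word_weight p q v * of_bool (ends_with_H j v))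
      + (1 - \<gamma>) * (word_weight p q v * of_bool (ends_with_H j v \<and> count_H v = j)))
      has_sum \<gamma> * (q ^ j / p) + (1 - \<gamma>) * (p * q) ^ j) {v. dyck v}"
    using has_sum_dyck_ends_with_H has_sum_dyck_staircase
    by (intro has_sum_add has_sum_cmult_right has_sum_mult_of_bool) (simp_all add: conj_assoc)
  then show ?thesis
    by (rule has_sum_cong[THEN iffD1, rotated]) (auto simp: algebra_simps)
qed

lemma has_sum_dyck_fork_uncles:
  assumes n1: "2 \<le> n1"
  shows "((\<lambda>v. q^2 * p * word_weight p q v * coin_expectation \<gamma> (\<lambda>\<omega>. real (fork_uncles n1 \<omega>)) (fork_word v))
    has_sum (q^2 / p) * (1 - q^(n1 - 1)) * \<gamma> + (1 - \<gamma>) * p * q^2 * (1 - (p * q)^(n1 - 1)) / (1 - p * q))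
    {v. dyck v}"
proof -
  let ?term = "\<lambda>j v. word_weight p q v * (of_bool (ends_with_H j v) * (if j = count_H v then 1 else \<gamma>))"
  have "((\<lambda>v. q^2 * p * (\<Sum>j<n1 - 1. ?term j v))
      has_sum q^2 * p * (\<Sum>j<n1 - 1. \<gamma> * (q ^ j / p) + (1 - \<gamma>) * (p * q) ^ j)) {v. dyck v}"
    by (intro has_sum_cmult_right has_sum_sum has_sum_dyck_fork_uncle_term) auto
  then show ?thesis
    unfolding fork_uncle_series_eq
  proof (rule has_sum_cong[THEN iffD1, rotated])
    fix v assume "v \<in> {v. dyck v}"
    then show "q^2 * p * (\<Sum>j<n1 - 1. ?term j v) =
        q^2 * p * word_weight p q v * coin_expectation \<gamma> (\<lambda>\<omega>. real (fork_uncles n1 \<omega>)) (fork_word v)"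
      by (simp only: mem_Collect_eq coin_expectation_fork_uncles[OF _ n1] sum_distrib_left mult.assoc)
  qed
qed

lemma has_sum_fork_uncles:
  assumes "0 \<le> \<gamma>" "\<gamma> \<le> 1" and n1: "2 \<le> n1"
  shows "((\<lambda>\<omega>. outcome_prob p q \<gamma> \<omega> * real (fork_uncles n1 \<omega>)) has_sum
    (q^2 / p) * (1 - q^(n1 - 1)) * \<gamma> + (1 - \<gamma>) * p * q^2 * (1 - (p * q)^(n1 - 1)) / (1 - p * q)) UNIV"
proof -
  let ?f = "\<lambda>\<omega>. real (fork_uncles n1 \<omega>)"
  have "coin_expectation \<gamma> ?f [True, False, True] = 0"
    by (simp add: coin_expectation_def fork_uncles_SHS del: fork_uncles.simps)
  moreover have "coin_expectation \<gamma> ?f [False] = 0" "coin_expectation \<gamma> ?f [True, False, False] = 0"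
    by (simp_all add: coin_expectation_def attacker_wins_def fork_word_def)
  ultimately have "((\<lambda>w. cycle_prob p q w * coin_expectation \<gamma> ?f w) has_sum
      (q^2 / p) * (1 - q^(n1 - 1)) * \<gamma> + (1 - \<gamma>) * p * q^2 * (1 - (p * q)^(n1 - 1)) / (1 - p * q)) UNIV"
    using has_sum_cycle_prob[OF has_sum_dyck_fork_uncles[OF n1, where \<gamma> = \<gamma>]] by simp
  then show ?thesis
    using has_sum_outcome_prob_coin_expectation[of p q \<gamma> ?f] assms p_pos q_pos by simp
qed

end

theorem proposition9:
  fixes p q \<gamma> :: real and n1 :: nat
  assumes "p + q = 1" and "0 < q" and "q < p"
    and "0 \<le> \<gamma>" and "\<gamma> \<le> 1" and "2 \<le> n1"
  shows "((\<lambda>(\<omega>, \<omega>'). outcome_prob p q \<gamma> \<omega> * outcome_prob p q \<gamma> \<omega>' * real (U_h n1 \<omega> \<omega>'))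
           has_sum
         (p^2 * q + (p + (1 - \<gamma>) * p^2 * q) *
            ((q^2 / p) * (1 - q^(n1 - 1)) * \<gamma>
             + (1 - \<gamma>) * p * q^2 * (1 - (p * q)^(n1 - 1)) / (1 - p * q)))) UNIV"
proof -
  interpret hashrates p q
    using assms(1-3) by unfold_locales
  let ?P = "outcome_prob p q \<gamma>"
  let ?V = "(q^2 / p) * (1 - q^(n1 - 1)) * \<gamma> + (1 - \<gamma>) * p * q^2 * (1 - (p * q)^(n1 - 1)) / (1 - p * q)"
  let ?own = "\<lambda>(\<omega>, \<omega>'). ?P \<omega> * of_bool (fst \<omega> = [True, False, False]) * ?P \<omega>'"
  let ?fork = "\<lambda>(\<omega>, \<omega>'). ?P \<omega> * real (fork_uncles n1 \<omega>) * (?P \<omega>' * of_bool (honest_first_block \<omega>'))"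
  have nonneg: "0 \<le> ?P \<omega>" for \<omega>
    using assms p_pos by (intro outcome_prob_nonneg) auto
  have "(?own has_sum p^2 * q * 1) UNIV"
    using assms nonneg by (intro has_sum_product_nonneg has_sum_SHH has_sum_outcome_prob) auto
  moreover have "(?fork has_sum ?V * (p + (1 - \<gamma>) * p^2 * q)) UNIV"
    using assms nonneg by (intro has_sum_product_nonneg has_sum_fork_uncles has_sum_honest_first_block) auto
  ultimately have "((\<lambda>z. ?own z + ?fork z) has_sum p^2 * q * 1 + ?V * (p + (1 - \<gamma>) * p^2 * q)) UNIV"
    by (rule has_sum_add)
  moreover have "?own z + ?fork z = (\<lambda>(\<omega>, \<omega>'). ?P \<omega> * ?P \<omega>' * real (U_h n1 \<omega> \<omega>')) z" for z
    using outcome_prob_U_h_decomposition[of n1] assms(6) by (cases z) simp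
  ultimately show ?thesis
    by (simp add: mult.commute)
qed

end
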